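(* The function $k_p$ is a closure operator on $\mathcal{L}$, i.e. for all $\ell, \jmath \in \mathcal{L}$: (1) $\ell \sqsubseteq k_p(\ell)$; (2) $\ell \sqsubseteq \jmath \implies k_p(\ell) \sqsubseteq k_p(\jmath)$; (3) $k_p(\ell) = k_p(k_p(\ell))$.
   Context: $\mathcal{L}$ is a security lattice (ordered by $\sqsubseteq$) that also has greatest lower bounds (meets) of arbitrary subsets. Programs $p$ are partial functions from $\mathcal{P}(I \times \mathcal{L})$ to $\mathcal{P}(O \times \mathcal{L})$ (sets of labeled inputs to sets of labeled outputs), and for a labeled set $x$, $\mathcal{L}(x) = \{\ell \mid a^\ell \in x\}$ is the set of labels occurring in $x$. For such a program $p$ define $k_p(\ell)$ to be the greatest lower bound (meet) in $\mathcal{L}$ of the set $\{\jmath \mid \exists x.\ \jmath \in \mathcal{L}(p(x)) \wedge \ell \sqsubseteq \jmath\}$, i.e. of all output labels of $p$ that lie above $\ell$ (the meet of the empty set being the top element). *)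

theory Defs
  imports Main
begin

definition labels :: "('a \<times> 'l) set \<Rightarrow> 'l set" where
  "labels x = {l. \<exists>a. (a, l) \<in> x}"

text \<open>Programs are partial functions from labeled input sets to labeled output sets,
  modelled as option-valued functions (None = undefined).
  k_p(l) = meet of all output labels of p lying above l.\<close>
definition kp :: "(('i \<times> 'l::complete_lattice) set \<Rightarrow> ('o \<times> 'l) set option) \<Rightarrow> 'l \<Rightarrow> 'l" where
  "kp p l = Inf {j. \<exists>x y. p x = Some y \<and> j \<in> labels y \<and> l \<le> j}"

end

theory Submission
  imports Defs
begin

text \<open>Nothing about p matters beyond its set S of output labels: for any subset S of a
  complete lattice, l \<mapsto> \<Sqinter>{j \<in> S. l \<le> j} is a closure operator. Idempotence holds because
  an element of S lies above l exactly when it lies above this meet.\<close>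

definition inf_above :: "'a::complete_lattice set \<Rightarrow> 'a \<Rightarrow> 'a" where
  "inf_above S l = Inf {j \<in> S. l \<le> j}"

lemma le_inf_above: "l \<le> inf_above S l"
  unfolding inf_above_def by (rule Inf_greatest) simp

lemma inf_above_mono: "l \<le> j \<Longrightarrow> inf_above S l \<le> inf_above S j"
  unfolding inf_above_def by (rule Inf_superset_mono) auto

lemma inf_above_le_iff: "j \<in> S \<Longrightarrow> inf_above S l \<le> j \<longleftrightarrow> l \<le> j"
  using le_inf_above order_trans unfolding inf_above_def by (blast intro: Inf_lower)

lemma inf_above_idem: "inf_above S (inf_above S l) = inf_above S l"
proof -
  have "{j \<in> S. inf_above S l \<le> j} = {j \<in> S. l \<le> j}"
    using inf_above_le_iff by blast
  then show ?thesis
    by (simp add: inf_above_def)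
qed

definition output_labels :: "('i \<Rightarrow> ('o \<times> 'l) set option) \<Rightarrow> 'l set" where
  "output_labels p = {j. \<exists>x y. p x = Some y \<and> j \<in> labels y}"

lemma kp_eq_inf_above: "kp p = inf_above (output_labels p)"
  unfolding kp_def inf_above_def output_labels_def by (rule ext, rule arg_cong[where f = Inf]) blast

theorem mainTheorem11:
  fixes p :: "('i \<times> 'l::complete_lattice) set \<Rightarrow> ('o \<times> 'l) set option"
  shows "(\<forall>l. l \<le> kp p l) \<and> (\<forall>l j. l \<le> j \<longrightarrow> kp p l \<le> kp p j) \<and> (\<forall>l. kp p l = kp p (kp p l))"
  unfolding kp_eq_inf_above using le_inf_above inf_above_mono inf_above_idem by metis

end
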